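(* For all $N,k^*\in\omega$ and every real $\epsilon>0$ there is $M\in\omega$ with the following property. For every FAM $\Xi$ and all sets $A_n\subseteq\omega$ ($n<N$) there is a nonempty finite $u\subseteq\omega$ with $|u|\le M$ and $\min(u)>k^*$ such that \[ \Xi(A_n)-\epsilon<\frac{|A_n\cap u|}{|u|}<\Xi(A_n)+\epsilon\qquad\text{for all }n<N . \]
   Context: A partial FAM (finitely additive measure) is a finitely additive probability measure $\Xi'$ defined on a Boolean subalgebra $\mathcal B$ of $\mathcal P(\omega)$ such that $\{n\}\in\mathcal B$ and $\Xi'(\{n\})=0$ for every $n\in\omega$. A FAM is a partial FAM whose domain is all of $\mathcal P(\omega)$. *)

theory Defs
  imports "HOL-Analysis.Analysis"
begin

definition bool_subalg :: "nat set set \<Rightarrow> bool" where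
  "bool_subalg B \<longleftrightarrow> {} \<in> B \<and> (\<forall>A\<in>B. UNIV - A \<in> B) \<and> (\<forall>A\<in>B. \<forall>C\<in>B. A \<union> C \<in> B)"

text \<open>A partial FAM: a finitely additive probability measure on a Boolean subalgebra B
  containing all singletons, vanishing on singletons. Values outside B are irrelevant.\<close>
definition partial_FAM :: "nat set set \<Rightarrow> (nat set \<Rightarrow> real) \<Rightarrow> bool" where
  "partial_FAM B \<Xi> \<longleftrightarrow> bool_subalg B
     \<and> (\<forall>A\<in>B. 0 \<le> \<Xi> A)
     \<and> \<Xi> UNIV = 1
     \<and> (\<forall>A\<in>B. \<forall>C\<in>B. A \<inter> C = {} \<longrightarrow> \<Xi> (A \<union> C) = \<Xi> A + \<Xi> C)
     \<and> (\<forall>n. {n} \<in> B \<and> \<Xi> {n} = 0)"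

definition FAM :: "(nat set \<Rightarrow> real) \<Rightarrow> bool" where
  "FAM \<Xi> \<longleftrightarrow> partial_FAM UNIV \<Xi>"

end

theory Submission
  imports Defs
begin

text \<open>The sets \<open>A n\<close>, \<open>n < N\<close>, cut \<open>\<omega>\<close> into at most \<open>2^N\<close> atoms, and each \<open>\<Xi> (A n)\<close> is the
  sum of the measures of the atoms inside \<open>A n\<close>. Round the measure \<open>p\<close> of every atom up to a
  multiple \<open>m / q\<close> of \<open>1/q\<close>. Atoms of positive measure are infinite, since finite sets are null, so
  we can pick \<open>m\<close> points above \<open>k\<^sup>*\<close> from each atom. The union \<open>u\<close> of these points has between \<open>q\<close>
  and \<open>q + 2^N\<close> elements, and \<open>|A n \<inter> u| / |u|\<close> differs from \<open>\<Xi> (A n)\<close> by at most \<open>2^N / q\<close>,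
  which is below \<open>\<epsilon>\<close> for \<open>q\<close> large.\<close>

lemma FAM_nonneg: "FAM \<Xi> \<Longrightarrow> 0 \<le> \<Xi> A"
  and FAM_UNIV: "FAM \<Xi> \<Longrightarrow> \<Xi> UNIV = 1"
  and FAM_additive: "FAM \<Xi> \<Longrightarrow> A \<inter> C = {} \<Longrightarrow> \<Xi> (A \<union> C) = \<Xi> A + \<Xi> C"
  and FAM_singleton: "FAM \<Xi> \<Longrightarrow> \<Xi> {n} = 0"
  unfolding FAM_def partial_FAM_def by auto

lemma FAM_empty: "FAM \<Xi> \<Longrightarrow> \<Xi> {} = 0"
  using FAM_additive[of \<Xi> "{}" "{}"] by simp

lemma FAM_UN_disjoint:
  assumes "FAM \<Xi>" "finite I" "disjoint_family_on C I"
  shows "\<Xi> (\<Union>i\<in>I. C i) = (\<Sum>i\<in>I. \<Xi> (C i))"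
  using assms(2,3)
proof (induction I rule: finite_induct)
  case empty
  then show ?case using FAM_empty[OF assms(1)] by simp
next
  case (insert x F)
  have "C x \<inter> (\<Union>i\<in>F. C i) = {}"
    using insert.prems insert.hyps(2) unfolding disjoint_family_on_def by fastforce
  moreover have "disjoint_family_on C F"
    using insert.prems disjoint_family_on_mono by blast
  ultimately show ?case
    using insert FAM_additive[OF assms(1)] by simp
qed

lemma FAM_finite_eq_0:
  assumes "FAM \<Xi>" "finite S"
  shows "\<Xi> S = 0"
proof -
  have "\<Xi> S = \<Xi> (\<Union>x\<in>S. {x})" by simp
  also have "\<dots> = (\<Sum>x\<in>S. \<Xi> {x})"
    by (rule FAM_UN_disjoint[OF assms]) (simp add: disjoint_family_on_def)
  finally show ?thesis using FAM_singleton[OF assms(1)] by simp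
qed

definition atom :: "(nat \<Rightarrow> 'a set) \<Rightarrow> nat \<Rightarrow> nat set \<Rightarrow> 'a set" where
  "atom A N G = {x. \<forall>n<N. x \<in> A n \<longleftrightarrow> n \<in> G}"

lemma disjoint_family_on_atom: "disjoint_family_on (atom A N) (Pow {..<N})"
  unfolding disjoint_family_on_def
proof (intro ballI impI equals0I)
  fix G H x assume G: "G \<in> Pow {..<N}" and H: "H \<in> Pow {..<N}" and "G \<noteq> H"
    and "x \<in> atom A N G \<inter> atom A N H"
  then have "\<forall>n<N. n \<in> G \<longleftrightarrow> n \<in> H" unfolding atom_def by auto
  then have "G = H" using G H by auto
  then show False using \<open>G \<noteq> H\<close> by contradiction
qed

lemma UN_atom: "(\<Union>G\<in>Pow {..<N}. atom A N G) = UNIV"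
proof -
  have "x \<in> (\<Union>G\<in>Pow {..<N}. atom A N G)" for x
    by (rule UN_I[of "{n. n < N \<and> x \<in> A n}"]) (auto simp: atom_def)
  then show ?thesis by blast
qed

lemma UN_atom_containing:
  assumes "n < N"
  shows "A n = (\<Union>G\<in>{G\<in>Pow {..<N}. n \<in> G}. atom A N G)"
proof (intro equalityI subsetI)
  fix x assume "x \<in> A n"
  then show "x \<in> (\<Union>G\<in>{G\<in>Pow {..<N}. n \<in> G}. atom A N G)"
    using assms by (intro UN_I[of "{n. n < N \<and> x \<in> A n}"]) (auto simp: atom_def)
next
  fix x assume "x \<in> (\<Union>G\<in>{G\<in>Pow {..<N}. n \<in> G}. atom A N G)"
  then show "x \<in> A n" using assms unfolding atom_def by blast
qed

lemma finite_sample_of_disjoint_family: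
  fixes C :: "'i \<Rightarrow> nat set" and m :: "'i \<Rightarrow> nat"
  assumes "finite I" "disjoint_family_on C I"
    and "\<And>i. i \<in> I \<Longrightarrow> m i > 0 \<Longrightarrow> infinite (C i)"
  obtains u where "finite u" "u \<subseteq> (\<Union>i\<in>I. C i)" "\<forall>x\<in>u. k < x"
    "\<And>S. S \<subseteq> I \<Longrightarrow> card (u \<inter> (\<Union>i\<in>S. C i)) = (\<Sum>i\<in>S. m i)"
proof -
  have "\<exists>D. D \<subseteq> C i \<inter> {k<..} \<and> finite D \<and> card D = m i" if "i \<in> I" for i
  proof (cases "m i = 0")
    case True
    then show ?thesis by (intro exI[of _ "{}"]) simp
  next
    case False
    have "infinite (C i - {..k})"
      using Diff_infinite_finite[OF finite_atMost assms(3)[OF that]] False by blast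
    moreover have "C i - {..k} = C i \<inter> {k<..}" by auto
    ultimately have "infinite (C i \<inter> {k<..})" by simp
    then show ?thesis using infinite_arbitrarily_large[of _ "m i"] by blast
  qed
  then obtain D where D: "\<And>i. i \<in> I \<Longrightarrow> D i \<subseteq> C i \<inter> {k<..}"
    "\<And>i. i \<in> I \<Longrightarrow> finite (D i)" "\<And>i. i \<in> I \<Longrightarrow> card (D i) = m i"
    by metis
  define u where "u = (\<Union>i\<in>I. D i)"
  have D_disjoint: "D i \<inter> D j = {}" if "i \<in> I" "j \<in> I" "i \<noteq> j" for i j
    using D(1)[OF that(1)] D(1)[OF that(2)] disjoint_family_onD[OF assms(2) that] by blast
  have "card (u \<inter> (\<Union>i\<in>S. C i)) = (\<Sum>i\<in>S. m i)" if S: "S \<subseteq> I" for S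
  proof -
    have "u \<inter> (\<Union>i\<in>S. C i) = (\<Union>i\<in>S. D i)"
    proof (intro equalityI subsetI)
      fix x assume "x \<in> u \<inter> (\<Union>i\<in>S. C i)"
      then obtain i j where "i \<in> I" "x \<in> D i" "j \<in> S" "x \<in> C j" unfolding u_def by blast
      moreover have "i = j"
      proof (rule ccontr)
        assume "i \<noteq> j"
        then have "C i \<inter> C j = {}" using disjoint_family_onD[OF assms(2)] \<open>i \<in> I\<close> \<open>j \<in> S\<close> S by blast
        then show False using D(1)[OF \<open>i \<in> I\<close>] \<open>x \<in> D i\<close> \<open>x \<in> C j\<close> by blast
      qed
      ultimately show "x \<in> (\<Union>i\<in>S. D i)" by blast
    next
      fix x assume "x \<in> (\<Union>i\<in>S. D i)"
      then show "x \<in> u \<inter> (\<Union>i\<in>S. C i)" using D(1) S unfolding u_def by blast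
    qed
    also have "card \<dots> = (\<Sum>i\<in>S. card (D i))"
      using D(2) D_disjoint S finite_subset[OF S assms(1)] by (intro card_UN_disjoint) auto
    also have "\<dots> = (\<Sum>i\<in>S. m i)" using D(3) S by (intro sum.cong) auto
    finally show ?thesis .
  qed
  moreover have "finite u" "u \<subseteq> (\<Union>i\<in>I. C i)" "\<forall>x\<in>u. k < x"
    using D assms(1) unfolding u_def by auto
  ultimately show thesis using that by blast
qed

lemma sum_nat_ceiling_bounds:
  fixes f :: "'a \<Rightarrow> real"
  assumes "\<And>i. i \<in> S \<Longrightarrow> 0 \<le> f i"
  shows "(\<Sum>i\<in>S. f i) \<le> real (\<Sum>i\<in>S. nat \<lceil>f i\<rceil>)"
    and "real (\<Sum>i\<in>S. nat \<lceil>f i\<rceil>) \<le> (\<Sum>i\<in>S. f i) + card S"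
proof -
  have ceil: "f i \<le> real (nat \<lceil>f i\<rceil>)" "real (nat \<lceil>f i\<rceil>) \<le> f i + 1" if "i \<in> S" for i
    using assms[OF that] by linarith+
  show "(\<Sum>i\<in>S. f i) \<le> real (\<Sum>i\<in>S. nat \<lceil>f i\<rceil>)"
    using sum_mono[OF ceil(1)] by simp
  show "real (\<Sum>i\<in>S. nat \<lceil>f i\<rceil>) \<le> (\<Sum>i\<in>S. f i) + card S"
    using sum_mono[OF ceil(2)] by (simp add: sum.distrib)
qed

lemma ratio_close:
  fixes a t s q K :: real
  assumes "0 < q" "q \<le> t" "t \<le> q + K" "q * s \<le> a" "a \<le> q * s + K" "0 \<le> s" "s \<le> 1"
  shows "\<bar>a / t - s\<bar> \<le> K / q"
proof -
  have "s * t \<le> s * q + K" and "s * K \<le> K"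
    using assms mult_left_mono[OF assms(3) assms(6)] mult_right_mono[of s 1 K]
    by (auto simp: algebra_simps)
  then have "\<bar>a - s * t\<bar> \<le> K"
    using assms mult_left_mono[OF assms(2) assms(6)] by (auto simp: algebra_simps)
  then have "\<bar>a - s * t\<bar> / t \<le> K / q"
    using assms(1,2) by (meson abs_ge_zero frac_le order.trans)
  moreover have "\<bar>a / t - s\<bar> = \<bar>a - s * t\<bar> / t"
    using assms(1,2) by (simp add: field_simps)
  ultimately show ?thesis by simp
qed

lemma FAM_sum_atoms:
  assumes "FAM \<Xi>"
  shows "(\<Sum>G\<in>Pow {..<N}. \<Xi> (atom A N G)) = 1"
    and "n < N \<Longrightarrow> \<Xi> (A n) = (\<Sum>G\<in>{G\<in>Pow {..<N}. n \<in> G}. \<Xi> (atom A N G))"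
proof -
  show "(\<Sum>G\<in>Pow {..<N}. \<Xi> (atom A N G)) = 1"
    using FAM_UN_disjoint[OF assms _ disjoint_family_on_atom[of A N]]
      UN_atom[of A N] FAM_UNIV[OF assms] by simp
  assume "n < N"
  then have "\<Xi> (A n) = \<Xi> (\<Union>G\<in>{G\<in>Pow {..<N}. n \<in> G}. atom A N G)"
    by (subst UN_atom_containing[where A = A]) simp_all
  also have "\<dots> = (\<Sum>G\<in>{G\<in>Pow {..<N}. n \<in> G}. \<Xi> (atom A N G))"
    using disjoint_family_on_atom
    by (intro FAM_UN_disjoint[OF assms]) (auto intro: disjoint_family_on_mono[rotated])
  finally show "\<Xi> (A n) = (\<Sum>G\<in>{G\<in>Pow {..<N}. n \<in> G}. \<Xi> (atom A N G))" .
qed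

lemma FAM_approximating_sample:
  fixes A :: "nat \<Rightarrow> nat set" and q :: nat
  assumes "FAM \<Xi>" "0 < q"
  obtains u where "finite u" "\<forall>x\<in>u. k < x" "q \<le> card u" "card u \<le> q + 2 ^ N"
    "\<And>n. n < N \<Longrightarrow> \<bar>card (A n \<inter> u) / card u - \<Xi> (A n)\<bar> \<le> 2 ^ N / q"
proof -
  define P where "P = Pow {..<N}"
  define p where "p G = \<Xi> (atom A N G)" for G
  define m where "m G = nat \<lceil>q * p G\<rceil>" for G
  define S where "S n = {G\<in>P. n \<in> G}" for n
  have finP: "finite P" and cardP: "card P = 2 ^ N" unfolding P_def by (simp_all add: card_Pow)
  have qp_nonneg: "0 \<le> q * p G" for G unfolding p_def using FAM_nonneg[OF assms(1)] by simp
  have p_sum: "(\<Sum>G\<in>P. p G) = 1"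
    using FAM_sum_atoms(1)[OF assms(1)] unfolding P_def p_def .
  have p_sum_S: "\<Xi> (A n) = (\<Sum>G\<in>S n. p G)" if "n < N" for n
    using FAM_sum_atoms(2)[OF assms(1) that] unfolding S_def P_def p_def .
  have "infinite (atom A N G)" if "m G > 0" for G
    using that FAM_finite_eq_0[OF assms(1)] unfolding m_def p_def by fastforce
  then obtain u where u: "finite u" "\<forall>x\<in>u. k < x" "u \<subseteq> (\<Union>G\<in>P. atom A N G)"
    "\<And>T. T \<subseteq> P \<Longrightarrow> card (u \<inter> (\<Union>G\<in>T. atom A N G)) = (\<Sum>G\<in>T. m G)"
    using finite_sample_of_disjoint_family[OF finP disjoint_family_on_atom[of A N, folded P_def]]
    by metis
  have card_u: "card u = (\<Sum>G\<in>P. m G)" using u(3) u(4)[of P] by (simp add: Int_absorb2)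
  have bounds: "q * sum p T \<le> (\<Sum>G\<in>T. m G)" "(\<Sum>G\<in>T. m G) \<le> q * sum p T + card T" for T
    using sum_nat_ceiling_bounds[where S = T and f = "\<lambda>G. q * p G"] qp_nonneg unfolding m_def by (simp_all add: sum_distrib_left)
  have card_u_bounds: "real q \<le> card u" "card u \<le> real q + 2 ^ N"
    using bounds[of P] unfolding card_u p_sum cardP by simp_all
  have S_sub: "S n \<subseteq> P" for n unfolding S_def by blast
  have "\<bar>card (A n \<inter> u) / card u - \<Xi> (A n)\<bar> \<le> 2 ^ N / q" if n: "n < N" for n
  proof (rule ratio_close[where K = "2 ^ N"])
    have "card (A n \<inter> u) = card (u \<inter> (\<Union>G\<in>S n. atom A N G))"
      using UN_atom_containing[OF n, where A = A] unfolding S_def P_def by (simp add: Int_commute)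
    also have "\<dots> = (\<Sum>G\<in>S n. m G)" by (rule u(4)[OF S_sub])
    finally have card_A: "card (A n \<inter> u) = (\<Sum>G\<in>S n. m G)" .
    have "real (card (S n)) \<le> 2 ^ N"
      using card_mono[OF finP S_sub] cardP by (metis of_nat_le_iff of_nat_numeral of_nat_power)
    then show "q * \<Xi> (A n) \<le> card (A n \<inter> u)" "card (A n \<inter> u) \<le> q * \<Xi> (A n) + 2 ^ N"
      unfolding card_A p_sum_S[OF n] using bounds[of "S n"] by linarith+
    show "0 \<le> \<Xi> (A n)" using FAM_nonneg[OF assms(1)] .
    show "\<Xi> (A n) \<le> 1"
      using p_sum_S[OF n] p_sum sum_mono2[OF finP S_sub, where f = p] FAM_nonneg[OF assms(1)]
      unfolding p_def by simp
  qed (use assms(2) card_u_bounds in auto)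
  moreover have "real (card u) \<le> real (q + 2 ^ N)" using card_u_bounds(2) by simp
  then have "card u \<le> q + 2 ^ N" by (simp only: of_nat_le_iff)
  moreover have "q \<le> card u" using card_u_bounds(1) by simp
  ultimately show thesis using that u(1,2) by blast
qed

theorem lemma1:
  fixes N kstar :: nat and \<epsilon> :: real
  assumes "\<epsilon> > 0"
  shows "\<exists>M::nat. \<forall>\<Xi> (A :: nat \<Rightarrow> nat set). FAM \<Xi> \<longrightarrow>
           (\<exists>u. finite u \<and> u \<noteq> {} \<and> card u \<le> M \<and> Min u > kstar \<and>
              (\<forall>n<N. \<Xi> (A n) - \<epsilon> < real (card (A n \<inter> u)) / real (card u) \<and>
                     real (card (A n \<inter> u)) / real (card u) < \<Xi> (A n) + \<epsilon>))"
proof -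
  define q :: nat where "q = nat \<lceil>2 ^ N / \<epsilon>\<rceil> + 1"
  have q_pos: "0 < q" unfolding q_def by simp
  have "2 ^ N / \<epsilon> < q" unfolding q_def by linarith
  then have error: "2 ^ N / q < \<epsilon>" using assms q_pos by (simp add: field_simps)
  show ?thesis
  proof (rule exI[of _ "q + 2 ^ N"], intro allI impI)
    fix \<Xi> and A :: "nat \<Rightarrow> nat set"
    assume "FAM \<Xi>"
    then obtain u where u: "finite u" "\<forall>x\<in>u. kstar < x" "q \<le> card u" "card u \<le> q + 2 ^ N"
      "\<And>n. n < N \<Longrightarrow> \<bar>card (A n \<inter> u) / card u - \<Xi> (A n)\<bar> \<le> 2 ^ N / q"
      using FAM_approximating_sample[OF _ q_pos] by metis
    have "u \<noteq> {}" using u(3) q_pos by auto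
    moreover have "kstar < Min u" using u(1,2) Min_in[OF u(1) \<open>u \<noteq> {}\<close>] by blast
    moreover have "\<Xi> (A n) - \<epsilon> < card (A n \<inter> u) / card u \<and> card (A n \<inter> u) / card u < \<Xi> (A n) + \<epsilon>"
      if "n < N" for n
      using u(5)[OF that, unfolded abs_le_iff] error by linarith
    ultimately show "\<exists>u. finite u \<and> u \<noteq> {} \<and> card u \<le> q + 2 ^ N \<and> Min u > kstar \<and>
              (\<forall>n<N. \<Xi> (A n) - \<epsilon> < real (card (A n \<inter> u)) / real (card u) \<and>
                     real (card (A n \<inter> u)) / real (card u) < \<Xi> (A n) + \<epsilon>)"
      using u(1,4) by blast
  qed
qed

end
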